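(* Let $X$ be a real Banach space such that $\overline{\mathrm{Ext}\,B_{X^*}}^{w^*}\cap S_{X^*}$, with the weak$^*$ topology, is connected. Then there is no compact Hausdorff space $K$ and no U-embedding $T\colon X\to C(K)$.
   Context: For a linear isometry $T\colon X\to Y$ between Banach spaces, $T$ is a U-embedding if every $x^*\in X^*$ has a unique $y^*\in Y^*$ with $T^*(y^* )=x^*$ and $\|y^*\|=\|x^*\|$. $C(K)$ carries the sup norm; $\mathrm{Ext}\,B_{X^*}$ denotes the extreme points of the dual unit ball and $S_{X^*}$ the dual unit sphere. *)

theory Defs
  imports "HOL-Analysis.Analysis"
begin

text \<open>The dual space of X is represented by the type of bounded linear functionals
  'a => L real (blinfun) with the operator norm. The weak-star topology on it is the coarsest
  topology making all evaluations continuous, i.e. the pullback of the topology of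
  pointwise convergence (product topology on functions 'a \<Rightarrow> real).\<close>
definition weak_star_topology :: "('a::real_normed_vector \<Rightarrow>\<^sub>L real) topology" where
  "weak_star_topology =
     pullback_topology UNIV blinfun_apply (product_topology (\<lambda>_. euclideanreal) UNIV)"

definition U_embedding :: "('a::real_normed_vector \<Rightarrow> 'b::real_normed_vector) \<Rightarrow> bool" where
  "U_embedding T \<longleftrightarrow>
     linear T \<and> (\<forall>x. norm (T x) = norm x) \<and>
     (\<forall>xs :: 'a \<Rightarrow>\<^sub>L real. \<exists>!ys :: 'b \<Rightarrow>\<^sub>L real.
        (\<forall>x. blinfun_apply ys (T x) = blinfun_apply xs x) \<and> norm ys = norm xs)"

end

theory Submission
  imports Defs
begin

text \<open>
  By the Arens--Kelley theorem the extreme points of the dual unit ball of \<open>C(K)\<close> are the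
  functionals \<open>\<plusminus>\<delta>\<^sub>k\<close>. For a U-embedding \<open>T\<close>, every extreme point \<open>f\<close> of the dual ball of \<open>X\<close>
  has a unique norm-preserving extension, which is again extreme, so \<open>f = \<plusminus>T\<^sup>*\<delta>\<^sub>k\<close>. Hence the
  weak*-closure of the extreme points lies in the union of the two weak*-compact sets
  \<open>T\<^sup>*\<delta>(K)\<close> and \<open>-T\<^sup>*\<delta>(K)\<close>. Uniqueness of extensions makes them disjoint on the unit
  sphere, and both meet it: if \<open>|T x|\<close> attains its norm at \<open>k\<close>, then \<open>T\<^sup>*\<delta>\<^sub>k\<close> is a norm-one
  extreme point. So the set in question is disconnected.
\<close>

section \<open>Unit balls of normed spaces\<close>

lemma extreme_point_of_iff_convex_combination:
  "x extreme_point_of S \<longleftrightarrow>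
     x \<in> S \<and> (\<forall>p\<in>S. \<forall>q\<in>S. \<forall>u. 0 < u \<and> u < 1 \<and> x = (1 - u) *\<^sub>R p + u *\<^sub>R q \<longrightarrow> p = q)"
  by (auto simp: extreme_point_of_def in_segment)

lemma extreme_point_of_convex_combinationD:
  assumes "x extreme_point_of S" "p \<in> S" "q \<in> S" "0 < u" "u < 1" "x = (1 - u) *\<^sub>R p + u *\<^sub>R q"
  shows "p = q"
  using assms by (auto simp: extreme_point_of_iff_convex_combination)

lemma extreme_point_of_cball_uminus:
  fixes x :: "'a::real_normed_vector"
  assumes "x extreme_point_of cball 0 r"
  shows "- x extreme_point_of cball 0 r"
  unfolding extreme_point_of_iff_convex_combination
proof (intro conjI ballI allI impI)
  show "- x \<in> cball 0 r" using assms by (simp add: extreme_point_of_def)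
  fix p q u
  assume "p \<in> cball 0 r" "q \<in> cball 0 r" and u: "0 < u \<and> u < 1 \<and> - x = (1 - u) *\<^sub>R p + u *\<^sub>R q"
  then have "- p \<in> cball 0 r" "- q \<in> cball 0 r" "x = (1 - u) *\<^sub>R (- p) + u *\<^sub>R (- q)"
    by (auto simp: algebra_simps)
  with assms u have "- p = - q" unfolding extreme_point_of_iff_convex_combination by blast
  then show "p = q" by simp
qed

lemma norm_extreme_point_of_cball:
  fixes x :: "'a::real_normed_vector"
  assumes x: "x extreme_point_of cball 0 r" and nontriv: "\<exists>y::'a. y \<noteq> 0"
  shows "norm x = r"
proof (rule ccontr)
  assume "norm x \<noteq> r"
  with x have lt: "norm x < r" by (simp add: extreme_point_of_def)
  obtain v :: 'a where v: "norm v = 1"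
    using nontriv by (metis norm_sgn)
  define d where "d = (r - norm x) *\<^sub>R v"
  have nd: "norm d = r - norm x" using lt v by (simp add: d_def)
  then have "x - d \<in> cball 0 r" "x + d \<in> cball 0 r"
    using norm_triangle_ineq[of x d] norm_triangle_ineq4[of x d] by auto
  moreover have "x \<in> open_segment (x - d) (x + d)"
  proof -
    have "x - d \<noteq> x + d"
    proof
      assume "x - d = x + d"
      then have "(2::real) *\<^sub>R d = 0"
        by (simp add: scaleR_2 algebra_simps eq_neg_iff_add_eq_0[symmetric])
      with nd lt show False by simp
    qed
    moreover have "midpoint (x - d) (x + d) = x" by (simp add: midpoint_eq_iff)
    ultimately show ?thesis using midpoint_in_open_segment by metis
  qed
  ultimately show False using x by (auto simp: extreme_point_of_def)
qed

lemma blinfun_almost_attains_norm: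
  fixes L :: "'a::real_normed_vector \<Rightarrow>\<^sub>L real"
  assumes "0 < e"
  obtains u where "norm u \<le> 1" "norm L - e < L u"
proof -
  have "\<exists>u. norm u \<le> 1 \<and> norm L - e < L u"
  proof (rule ccontr)
    assume "\<nexists>u. norm u \<le> 1 \<and> norm L - e < L u"
    then have small: "L u \<le> norm L - e" if "norm u \<le> 1" for u
      using that by force
    have "norm L \<le> norm L - e"
    proof (rule norm_blinfun_bound)
      show "0 \<le> norm L - e" using small[of 0] by simp
      fix x
      show "norm (L x) \<le> (norm L - e) * norm x"
      proof (cases "x = 0")
        case False
        define y where "y = x /\<^sub>R norm x"
        have "norm y \<le> 1" "norm (- y) \<le> 1" using False by (auto simp: y_def)
        then have "L y \<le> norm L - e" "- L y \<le> norm L - e"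
          using small[of y] small[of "- y"] by (auto simp: blinfun.minus_right)
        then have "\<bar>L y\<bar> \<le> norm L - e" by linarith
        moreover have "L x = norm x * L y" using False by (simp add: y_def blinfun.scaleR_right)
        ultimately show ?thesis by (simp add: abs_mult mult.commute mult_left_mono)
      qed simp
    qed
    with assms show False by simp
  qed
  with that show thesis by blast
qed

lemma blinfun_le_norm:
  fixes L :: "'a::real_normed_vector \<Rightarrow>\<^sub>L real"
  assumes "norm u \<le> 1"
  shows "L u \<le> norm L"
proof -
  have "L u \<le> norm L * norm u" using norm_blinfun[of L u] by simp
  also have "\<dots> \<le> norm L" using assms by (simp add: mult_left_le)
  finally show ?thesis .
qed

section \<open>Bounded continuous functions\<close>

lemma apply_Bcontfun_bounded:
  assumes "continuous_on UNIV f" "\<And>x. norm (f x) \<le> b"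
  shows "apply_bcontfun (Bcontfun f) = f"
  by (rule Bcontfun_inverse[OF bcontfun_normI[OF assms]])

lemma apply_Bcontfun_compact:
  fixes f :: "'a::topological_space \<Rightarrow> 'b::real_normed_vector"
  assumes "compact (UNIV :: 'a set)" "continuous_on UNIV f"
  shows "apply_bcontfun (Bcontfun f) = f"
  using assms by (intro Bcontfun_inverse) (auto simp: bcontfun_def intro: compact_imp_bounded compact_continuous_image)

lemma norm_const_bcontfun [simp]:
  "norm (const_bcontfun c :: 'a::topological_space \<Rightarrow>\<^sub>C 'b::real_normed_vector) = norm c"
proof (rule antisym)
  show "norm (const_bcontfun c :: 'a \<Rightarrow>\<^sub>C 'b) \<le> norm c" by (rule norm_bound) simp
  show "norm c \<le> norm (const_bcontfun c :: 'a \<Rightarrow>\<^sub>C 'b)"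
    using norm_bounded[of "const_bcontfun c :: 'a \<Rightarrow>\<^sub>C 'b" undefined] by simp
qed

lemma abs_apply_bcontfun_le: "\<bar>apply_bcontfun f x\<bar> \<le> norm (f :: 'a::topological_space \<Rightarrow>\<^sub>C real)"
  using norm_bounded[of f x] by simp

definition bcontfun_mult :: "('a::topological_space \<Rightarrow>\<^sub>C real) \<Rightarrow> ('a \<Rightarrow>\<^sub>C real) \<Rightarrow> ('a \<Rightarrow>\<^sub>C real)"
  where "bcontfun_mult g h = Bcontfun (\<lambda>x. g x * h x)"

lemma bcontfun_mult_apply [simp]: "apply_bcontfun (bcontfun_mult g h) x = g x * h x"
proof -
  have "norm (g y * h y) \<le> norm g * norm h" for y
    unfolding real_norm_def abs_mult by (intro mult_mono abs_apply_bcontfun_le) auto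
  then have "apply_bcontfun (Bcontfun (\<lambda>y. g y * h y)) = (\<lambda>y. g y * h y)"
    by (intro apply_Bcontfun_bounded continuous_intros continuous_on_apply_bcontfun)
  then show ?thesis by (simp add: bcontfun_mult_def)
qed

lemma bounded_linear_bcontfun_mult: "bounded_linear (bcontfun_mult h)"
proof (rule bounded_linear_intro[where K = "norm h"])
  fix u v :: "'a::topological_space \<Rightarrow>\<^sub>C real" and r :: real
  show "bcontfun_mult h (u + v) = bcontfun_mult h u + bcontfun_mult h v"
    by (rule bcontfun_eqI) (simp add: algebra_simps)
  show "bcontfun_mult h (r *\<^sub>R u) = r *\<^sub>R bcontfun_mult h u"
    by (rule bcontfun_eqI) (simp add: algebra_simps)
  show "norm (bcontfun_mult h u) \<le> norm u * norm h"
  proof (rule norm_bound)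
    fix x
    have "\<bar>h x\<bar> * \<bar>u x\<bar> \<le> norm h * norm u"
      by (intro mult_mono abs_apply_bcontfun_le) auto
    then show "norm (bcontfun_mult h u x) \<le> norm u * norm h"
      by (simp add: abs_mult mult.commute)
  qed
qed

definition mult_functional ::
    "('a::topological_space \<Rightarrow>\<^sub>C real) \<Rightarrow> (('a \<Rightarrow>\<^sub>C real) \<Rightarrow>\<^sub>L real) \<Rightarrow> (('a \<Rightarrow>\<^sub>C real) \<Rightarrow>\<^sub>L real)"
  where "mult_functional h F = Blinfun (\<lambda>u. F (bcontfun_mult h u))"

lemma mult_functional_apply [simp]: "mult_functional h F u = F (bcontfun_mult h u)"
proof -
  have "bounded_linear (\<lambda>u. F (bcontfun_mult h u))"
    by (rule bounded_linear_compose[OF blinfun.bounded_linear_right bounded_linear_bcontfun_mult])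
  then show ?thesis by (simp add: mult_functional_def bounded_linear_Blinfun_apply)
qed

definition eval_at :: "'a::topological_space \<Rightarrow> ('a \<Rightarrow>\<^sub>C real) \<Rightarrow>\<^sub>L real"
  where "eval_at k = Blinfun (\<lambda>u. apply_bcontfun u k)"

lemma eval_at_apply [simp]: "eval_at k u = u k"
proof -
  have "bounded_linear (\<lambda>u::'a \<Rightarrow>\<^sub>C real. apply_bcontfun u k)"
    by (rule bounded_linear_intro[where K = 1]) (auto simp: abs_apply_bcontfun_le)
  then show ?thesis by (simp add: eval_at_def bounded_linear_Blinfun_apply)
qed

lemma norm_eval_at [simp]: "norm (eval_at k) = 1"
proof (rule antisym)
  show "norm (eval_at k) \<le> 1"
    by (rule norm_blinfun_bound) (simp_all add: abs_apply_bcontfun_le)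
  show "1 \<le> norm (eval_at k)"
    using norm_blinfun[of "eval_at k" "const_bcontfun 1"] by simp
qed

section \<open>Extreme points of the dual ball of \<open>C(K)\<close>\<close>

lemma convex_combination_eq_upper_bound:
  fixes a b m u :: real
  assumes "0 < u" "u < 1" "a \<le> m" "b \<le> m" "(1 - u) * a + u * b = m"
  shows "a = m" "b = m"
proof -
  have "0 \<le> (1 - u) * (m - a)" "0 \<le> u * (m - b)" using assms by simp_all
  moreover have "(1 - u) * (m - a) + u * (m - b) = 0" using assms(5) by (simp add: algebra_simps)
  ultimately have "(1 - u) * (m - a) = 0" "u * (m - b) = 0" by linarith+
  then show "a = m" "b = m" using assms(1,2) by simp_all
qed

lemma unital_functional_nonneg:
  fixes G :: "('a::topological_space \<Rightarrow>\<^sub>C real) \<Rightarrow>\<^sub>L real"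
  assumes "norm G \<le> 1" "G (const_bcontfun 1) = 1" "\<And>x. 0 \<le> apply_bcontfun w x"
  shows "0 \<le> G w"
proof -
  define c where "c = norm w"
  have "norm (c *\<^sub>R const_bcontfun 1 - w) \<le> c"
  proof (rule norm_bound)
    fix x
    show "norm ((c *\<^sub>R const_bcontfun 1 - w) x) \<le> c"
      using abs_apply_bcontfun_le[of w x] assms(3)[of x] by (simp add: c_def)
  qed
  then have "norm G * norm (c *\<^sub>R const_bcontfun 1 - w) \<le> 1 * c"
    using assms(1) by (intro mult_mono) auto
  moreover have "G (c *\<^sub>R const_bcontfun 1 - w) \<le> norm G * norm (c *\<^sub>R const_bcontfun 1 - w)"
    using norm_blinfun[of G "c *\<^sub>R const_bcontfun 1 - w"] by simp
  ultimately have "G (c *\<^sub>R const_bcontfun 1 - w) \<le> c" by simp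
  with assms(2) show ?thesis by (simp add: blinfun.diff_right blinfun.scaleR_right)
qed

lemma eq_eval_at_if_vanishing:
  fixes G :: "('a::topological_space \<Rightarrow>\<^sub>C real) \<Rightarrow>\<^sub>L real"
  assumes one: "G (const_bcontfun 1) = 1"
    and vanish: "\<And>p. (\<And>x. 0 \<le> apply_bcontfun p x) \<Longrightarrow> p k = 0 \<Longrightarrow> G p = 0"
  shows "G = eval_at k"
proof (rule blinfun_eqI)
  fix w :: "'a \<Rightarrow>\<^sub>C real"
  define p where "p = Bcontfun (\<lambda>x. max (w x - w k) 0)"
  define n where "n = Bcontfun (\<lambda>x. max (w k - w x) 0)"
  have bounds: "norm (max (w x - w k) 0) \<le> 2 * norm w" "norm (max (w k - w x) 0) \<le> 2 * norm w" for x
    using abs_apply_bcontfun_le[of w x] abs_apply_bcontfun_le[of w k] by auto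
  have p: "apply_bcontfun p = (\<lambda>x. max (w x - w k) 0)"
    unfolding p_def
    by (rule apply_Bcontfun_bounded[OF _ bounds(1)]) (intro continuous_intros continuous_on_apply_bcontfun)
  have n: "apply_bcontfun n = (\<lambda>x. max (w k - w x) 0)"
    unfolding n_def
    by (rule apply_Bcontfun_bounded[OF _ bounds(2)]) (intro continuous_intros continuous_on_apply_bcontfun)
  have "w k *\<^sub>R const_bcontfun 1 + p - n = w"
    by (rule bcontfun_eqI) (simp add: p n)
  from arg_cong[OF this, of "blinfun_apply G"]
  have "G w = w k * G (const_bcontfun 1) + G p - G n"
    by (simp add: blinfun.add_right blinfun.diff_right blinfun.scaleR_right)
  moreover have "G p = 0" "G n = 0" by (auto intro!: vanish simp: p n)
  ultimately show "G w = eval_at k w" using one by simp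
qed

lemma norm_extreme_point_of_dual_ball_bcontfun:
  fixes F :: "('a::topological_space \<Rightarrow>\<^sub>C real) \<Rightarrow>\<^sub>L real"
  assumes "F extreme_point_of cball 0 1"
  shows "norm F = 1"
proof -
  have "eval_at undefined \<noteq> (0 :: ('a \<Rightarrow>\<^sub>C real) \<Rightarrow>\<^sub>L real)"
    by (metis norm_eval_at norm_zero zero_neq_one)
  then show ?thesis using norm_extreme_point_of_cball[OF assms] by blast
qed

lemma eval_at_extreme_point: "eval_at k extreme_point_of cball 0 1"
  unfolding extreme_point_of_iff_convex_combination
proof (intro conjI ballI allI impI)
  show "eval_at k \<in> cball 0 1" by simp
  fix G H :: "('a \<Rightarrow>\<^sub>C real) \<Rightarrow>\<^sub>L real" and u :: real
  assume "G \<in> cball 0 1" "H \<in> cball 0 1" and u: "0 < u \<and> u < 1 \<and> eval_at k = (1 - u) *\<^sub>R G + u *\<^sub>R H"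
  then have G: "norm G \<le> 1" and H: "norm H \<le> 1" by auto
  have combination: "w k = (1 - u) * G w + u * H w" for w :: "'a \<Rightarrow>\<^sub>C real"
    using u by (metis blinfun.add_left blinfun.scaleR_left eval_at_apply real_scaleR_def)
  let ?one = "const_bcontfun 1 :: 'a \<Rightarrow>\<^sub>C real"
  have "G ?one \<le> 1" "H ?one \<le> 1"
    using norm_blinfun[of G ?one] norm_blinfun[of H ?one] G H by auto
  with combination[of ?one] u have one: "G ?one = 1" "H ?one = 1"
    using convex_combination_eq_upper_bound[of u "G ?one" 1 "H ?one"] by auto
  have "G p = 0 \<and> H p = 0" if "\<And>x. 0 \<le> apply_bcontfun p x" "p k = 0" for p
  proof -
    have "0 \<le> G p" "0 \<le> H p"
      using unital_functional_nonneg that(1) G H one by blast+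
    with combination[of p] that(2) u show ?thesis
      using convex_combination_eq_upper_bound[of u "- G p" 0 "- H p"] by auto
  qed
  with one show "G = H" using eq_eval_at_if_vanishing[of G k] eq_eval_at_if_vanishing[of H k] by blast
qed

lemma apply_bcontfun_sum:
  "finite J \<Longrightarrow> apply_bcontfun (\<Sum>j\<in>J. f j) x = (\<Sum>j\<in>J. apply_bcontfun (f j) x)"
  by (induction J rule: finite_induct) auto

lemma mult_functional_add:
  "mult_functional (g + h) F = mult_functional g F + mult_functional h F"
proof -
  have "bcontfun_mult (g + h) u = bcontfun_mult g u + bcontfun_mult h u" for u
    by (rule bcontfun_eqI) (simp add: algebra_simps)
  then show ?thesis by (intro blinfun_eqI) (simp add: blinfun.add_left blinfun.add_right)
qed

lemma mult_functional_scaleR: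
  "mult_functional (a *\<^sub>R g) F = a *\<^sub>R mult_functional g F"
proof -
  have "bcontfun_mult (a *\<^sub>R g) u = a *\<^sub>R bcontfun_mult g u" for u
    by (rule bcontfun_eqI) simp
  then show ?thesis by (intro blinfun_eqI) (simp add: blinfun.scaleR_left blinfun.scaleR_right)
qed

lemma mult_functional_scaleR_right:
  "mult_functional h (a *\<^sub>R F) = a *\<^sub>R mult_functional h F"
  by (intro blinfun_eqI) (simp add: blinfun.scaleR_left)

lemma mult_functional_const:
  fixes F :: "('a::topological_space \<Rightarrow>\<^sub>C real) \<Rightarrow>\<^sub>L real"
  shows "mult_functional (const_bcontfun c) F = c *\<^sub>R F"
proof -
  have "bcontfun_mult (const_bcontfun c) u = c *\<^sub>R u" for u :: "'a \<Rightarrow>\<^sub>C real"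
    by (rule bcontfun_eqI) simp
  then show ?thesis by (intro blinfun_eqI) (simp add: blinfun.scaleR_left blinfun.scaleR_right)
qed

lemma mult_functional_mult:
  "mult_functional (bcontfun_mult g h) F = mult_functional g (mult_functional h F)"
proof -
  have "bcontfun_mult (bcontfun_mult g h) u = bcontfun_mult h (bcontfun_mult g u)" for u
    by (rule bcontfun_eqI) (simp add: algebra_simps)
  then show ?thesis by (intro blinfun_eqI) simp
qed

lemma norm_mult_functional_add_le:
  fixes F :: "('a::topological_space \<Rightarrow>\<^sub>C real) \<Rightarrow>\<^sub>L real"
  assumes h0: "\<And>x. 0 \<le> apply_bcontfun h x" and h1: "\<And>x. apply_bcontfun h x \<le> 1"
  shows "norm (mult_functional h F) + norm (mult_functional (const_bcontfun 1 - h) F) \<le> norm F"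
proof (rule ccontr)
  let ?A = "mult_functional h F" and ?B = "mult_functional (const_bcontfun 1 - h) F"
  assume contra: "\<not> ?thesis"
  define e where "e = (norm ?A + norm ?B - norm F) / 2"
  have e: "0 < e" using contra by (simp add: e_def)
  obtain u where u: "norm u \<le> 1" "norm ?A - e < ?A u" using blinfun_almost_attains_norm[OF e] .
  obtain v where v: "norm v \<le> 1" "norm ?B - e < ?B v" using blinfun_almost_attains_norm[OF e] .
  define w where "w = bcontfun_mult h u + bcontfun_mult (const_bcontfun 1 - h) v"
  have "norm w \<le> 1"
  proof (rule norm_bound)
    fix x
    have "\<bar>u x\<bar> \<le> 1" "\<bar>v x\<bar> \<le> 1"
      using abs_apply_bcontfun_le[of u x] abs_apply_bcontfun_le[of v x] u(1) v(1) by auto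
    then have "\<bar>h x * u x\<bar> \<le> h x" "\<bar>(1 - h x) * v x\<bar> \<le> 1 - h x"
      using h0[of x] h1[of x] by (auto simp: abs_mult intro: mult_left_le)
    then show "norm (w x) \<le> 1"
      using abs_triangle_ineq[of "h x * u x" "(1 - h x) * v x"] by (simp add: w_def)
  qed
  then have "F w \<le> norm F" by (rule blinfun_le_norm)
  moreover have "F w = ?A u + ?B v" by (simp add: w_def blinfun.add_right)
  moreover have "2 * e = norm ?A + norm ?B - norm F" by (simp add: e_def)
  ultimately show False using u(2) v(2) by linarith
qed

text \<open>
  \<open>F = h F + (1 - h) F\<close> with \<open>\<parallel>h F\<parallel> + \<parallel>(1 - h) F\<parallel> = 1\<close> exhibits \<open>F\<close> as a convex combination of
  two points of the unit ball, so extremality makes \<open>h F\<close> a multiple of \<open>F\<close>.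
\<close>
lemma extreme_point_mult_functional_unit_interval:
  fixes F :: "('a::topological_space \<Rightarrow>\<^sub>C real) \<Rightarrow>\<^sub>L real"
  assumes F: "F extreme_point_of cball 0 1"
    and h0: "\<And>x. 0 \<le> apply_bcontfun h x" and h1: "\<And>x. apply_bcontfun h x \<le> 1"
  obtains c where "mult_functional h F = c *\<^sub>R F"
proof -
  let ?A = "mult_functional h F" and ?B = "mult_functional (const_bcontfun 1 - h) F"
  have nF: "norm F = 1" using norm_extreme_point_of_dual_ball_bcontfun[OF F] .
  have "?A + ?B = mult_functional (h + (const_bcontfun 1 - h)) F"
    by (simp only: mult_functional_add)
  also have "\<dots> = F" by (simp add: mult_functional_const)
  finally have sum: "?A + ?B = F" .
  then have "1 \<le> norm ?A + norm ?B" using nF norm_triangle_ineq[of ?A ?B] by simp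
  then have norms: "norm ?A + norm ?B = 1"
    using norm_mult_functional_add_le[OF h0 h1, of F] nF by linarith
  consider "?A = 0" | "?B = 0" | "?A \<noteq> 0" "?B \<noteq> 0" by blast
  then show thesis
  proof cases
    case 1
    then show thesis using that[of 0] by simp
  next
    case 2
    then show thesis using that[of 1] sum by simp
  next
    case 3
    define u where "u = norm ?B"
    have "0 < norm ?A" "0 < norm ?B" using 3 by simp_all
    then have u: "0 < u" "u < 1" "norm ?A = 1 - u" unfolding u_def using norms by linarith+
    define P where "P = ?A /\<^sub>R (1 - u)"
    define Q where "Q = ?B /\<^sub>R u"
    have "P \<in> cball 0 1" "Q \<in> cball 0 1" using u by (simp_all add: P_def Q_def u_def)
    moreover have "F = (1 - u) *\<^sub>R P + u *\<^sub>R Q" using u sum by (simp add: P_def Q_def)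
    ultimately have "P = Q" using extreme_point_of_convex_combinationD[OF F _ _ u(1,2)] by blast
    with \<open>F = (1 - u) *\<^sub>R P + u *\<^sub>R Q\<close> have "F = P" by (simp flip: scaleR_add_left)
    moreover have "?A = (1 - u) *\<^sub>R P" using u by (simp add: P_def)
    ultimately have "?A = (1 - u) *\<^sub>R F" by simp
    then show thesis by (rule that)
  qed
qed

lemma extreme_point_mult_functional:
  fixes F :: "('a::topological_space \<Rightarrow>\<^sub>C real) \<Rightarrow>\<^sub>L real"
  assumes F: "F extreme_point_of cball 0 1"
  obtains c where "mult_functional h F = c *\<^sub>R F"
proof -
  define M where "M = norm h + 1"
  have M: "0 < M" by (simp add: M_def add_nonneg_pos)
  define g where "g = (1 / (2 * M)) *\<^sub>R (h + const_bcontfun M)"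
  have bound: "\<bar>h x\<bar> < M" for x using abs_apply_bcontfun_le[of h x] by (simp add: M_def)
  have "0 \<le> g x" "g x \<le> 1" for x
    using bound[of x] M by (simp_all add: g_def field_simps abs_less_iff)
  then obtain c where c: "mult_functional g F = c *\<^sub>R F"
    using extreme_point_mult_functional_unit_interval[OF F] by blast
  have "h = (2 * M) *\<^sub>R g + (- M) *\<^sub>R const_bcontfun 1"
    using M by (intro bcontfun_eqI) (simp add: g_def field_simps)
  then have "mult_functional h F =
      (2 * M) *\<^sub>R mult_functional g F + (- M) *\<^sub>R mult_functional (const_bcontfun 1) F"
    by (simp only: mult_functional_add mult_functional_scaleR)
  also have "\<dots> = (2 * M * c - M) *\<^sub>R F"
    by (simp add: c mult_functional_const algebra_simps)
  finally show thesis by (rule that)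
qed

lemma bcontfun_mult_inverse:
  fixes s :: "'a::topological_space \<Rightarrow>\<^sub>C real"
  assumes "compact (UNIV :: 'a set)" and nonzero: "\<And>x. s x \<noteq> 0"
  obtains r where "bcontfun_mult s r = const_bcontfun 1"
proof
  have "apply_bcontfun (Bcontfun (\<lambda>x. 1 / s x)) = (\<lambda>x. 1 / s x)"
    using nonzero
    by (intro apply_Bcontfun_compact assms(1) continuous_intros continuous_on_apply_bcontfun) auto
  then show "bcontfun_mult s (Bcontfun (\<lambda>x. 1 / s x)) = const_bcontfun 1"
    using nonzero by (intro bcontfun_eqI) simp
qed

text \<open>
  If \<open>\<phi>\<close> were no point evaluation, compactness would give finitely many \<open>H\<^sub>k \<in> ker \<phi>\<close> without
  common zero; their sum of squares is then invertible, yet lies in \<open>ker \<phi>\<close>.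
\<close>
lemma character_eq_eval_at:
  fixes \<phi> :: "('a::topological_space \<Rightarrow>\<^sub>C real) \<Rightarrow> real"
  assumes compact: "compact (UNIV :: 'a set)" and lin: "linear \<phi>"
    and mult: "\<And>g h. \<phi> (bcontfun_mult g h) = \<phi> g * \<phi> h"
    and one: "\<phi> (const_bcontfun 1) = 1"
  obtains k where "\<And>g. \<phi> g = g k"
proof -
  have "\<exists>k. \<forall>g. \<phi> g = g k"
  proof (rule ccontr)
    assume "\<nexists>k. \<forall>g. \<phi> g = g k"
    then obtain g where g: "\<And>k. \<phi> (g k) \<noteq> g k k" by metis
    define H where "H k = g k - \<phi> (g k) *\<^sub>R const_bcontfun 1" for k
    have H: "\<phi> (H k) = 0" "H k k \<noteq> 0" for k
      using g[of k] by (simp_all add: H_def linear_diff[OF lin] linear_scale[OF lin] one)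
    obtain J where J: "finite J" "UNIV \<subseteq> (\<Union>k\<in>J. {x. H k x \<noteq> 0})"
    proof (rule compactE_image[OF compact, of UNIV "\<lambda>k. {x. H k x \<noteq> 0}"])
      show "open {x. H k x \<noteq> 0}" for k
        by (intro open_Collect_neq continuous_intros continuous_on_apply_bcontfun)
      show "UNIV \<subseteq> (\<Union>k\<in>UNIV. {x. H k x \<noteq> 0})" using H(2) by blast
    qed (rule that)
    define s where "s = (\<Sum>k\<in>J. bcontfun_mult (H k) (H k))"
    have "0 < s x" for x
    proof -
      obtain k where "k \<in> J" "H k x \<noteq> 0" using J(2) by blast
      then show ?thesis
        by (simp add: s_def apply_bcontfun_sum[OF J(1)])
           (intro sum_pos2[OF J(1)], auto simp: zero_less_mult_iff)
    qed
    then obtain r where r: "bcontfun_mult s r = const_bcontfun 1"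
      using bcontfun_mult_inverse[OF compact, of s] by (metis less_irrefl)
    have "\<phi> s * \<phi> r = 1" using one by (simp flip: mult add: r)
    moreover have "\<phi> s = 0" by (simp add: s_def linear_sum[OF lin] mult H)
    ultimately show False by simp
  qed
  with that show thesis by blast
qed

lemma extreme_point_mult_functional_eval_at:
  fixes F :: "('a::topological_space \<Rightarrow>\<^sub>C real) \<Rightarrow>\<^sub>L real"
  assumes compact: "compact (UNIV :: 'a set)" and F: "F extreme_point_of cball 0 1"
  obtains k where "\<And>h. mult_functional h F = h k *\<^sub>R F"
proof -
  have "\<forall>h. \<exists>c. mult_functional h F = c *\<^sub>R F"
    using extreme_point_mult_functional[OF F] by metis
  then obtain c where c: "\<And>h. mult_functional h F = c h *\<^sub>R F" by metis
  have c_eqI: "a = b" if "a *\<^sub>R F = b *\<^sub>R F" for a b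
    using that norm_extreme_point_of_dual_ball_bcontfun[OF F] by (auto simp: scaleR_cancel_right)
  have "linear c"
  proof (rule linearI)
    show "c (g + h) = c g + c h" for g h
      by (rule c_eqI) (simp only: scaleR_add_left mult_functional_add flip: c)
    show "c (a *\<^sub>R g) = a *\<^sub>R c g" for a g
      by (rule c_eqI) (simp only: real_scaleR_def flip: scaleR_scaleR c mult_functional_scaleR)
  qed
  moreover have "c (bcontfun_mult g h) = c g * c h" for g h
  proof (rule c_eqI)
    have "c (bcontfun_mult g h) *\<^sub>R F = mult_functional g (mult_functional h F)"
      by (simp only: mult_functional_mult flip: c)
    also have "\<dots> = (c g * c h) *\<^sub>R F" by (simp add: c mult_functional_scaleR_right mult.commute)
    finally show "c (bcontfun_mult g h) *\<^sub>R F = (c g * c h) *\<^sub>R F" .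
  qed
  moreover have "c (const_bcontfun 1) = 1"
    by (rule c_eqI) (simp only: mult_functional_const flip: c)
  ultimately obtain k where "\<And>g. c g = g k"
    using character_eq_eval_at[OF compact] by blast
  with c have "mult_functional h F = h k *\<^sub>R F" for h by simp
  then show thesis by (rule that)
qed

theorem extreme_point_of_dual_ball_bcontfun_iff:
  fixes F :: "('a::topological_space \<Rightarrow>\<^sub>C real) \<Rightarrow>\<^sub>L real"
  assumes compact: "compact (UNIV :: 'a set)"
  shows "F extreme_point_of cball 0 1 \<longleftrightarrow> (\<exists>k. F = eval_at k \<or> F = - eval_at k)"
proof
  assume F: "F extreme_point_of cball 0 1"
  obtain k where k: "\<And>h. mult_functional h F = h k *\<^sub>R F"
    using extreme_point_mult_functional_eval_at[OF compact F] by blast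
  define a where "a = F (const_bcontfun 1)"
  have "F w = a * eval_at k w" for w
  proof -
    have "bcontfun_mult w (const_bcontfun 1) = w" by (rule bcontfun_eqI) simp
    then have "F w = mult_functional w F (const_bcontfun 1)" by simp
    then show ?thesis by (simp add: k a_def blinfun.scaleR_left)
  qed
  then have Fa: "F = a *\<^sub>R eval_at k"
    by (intro blinfun_eqI) (simp add: blinfun.scaleR_left)
  with norm_extreme_point_of_dual_ball_bcontfun[OF F] have "\<bar>a\<bar> = 1" by simp
  then have "a = 1 \<or> a = - 1" by (cases "0 \<le> a") auto
  with Fa show "\<exists>k. F = eval_at k \<or> F = - eval_at k" by auto
next
  assume "\<exists>k. F = eval_at k \<or> F = - eval_at k"
  then show "F extreme_point_of cball 0 1"
    using eval_at_extreme_point extreme_point_of_cball_uminus by blast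
qed

section \<open>The weak* topology\<close>

lemma topspace_weak_star_topology [simp]: "topspace weak_star_topology = UNIV"
  by (simp add: weak_star_topology_def topspace_pullback_topology)

lemma continuous_map_weak_star_topologyI:
  assumes "\<And>x. continuous_map X euclideanreal (\<lambda>y. blinfun_apply (f y) x)"
  shows "continuous_map X weak_star_topology f"
  unfolding weak_star_topology_def
  by (rule continuous_map_pullback') (simp_all add: continuous_map_componentwise_UNIV assms o_def)

lemma Hausdorff_space_weak_star_topology: "Hausdorff_space weak_star_topology"
proof (rule Hausdorff_space_injective_preimage)
  show "Hausdorff_space (product_topology (\<lambda>_::'a. euclideanreal) UNIV)"
    by (simp add: Hausdorff_space_product_topology)
  show "continuous_map weak_star_topology (product_topology (\<lambda>_. euclideanreal) UNIV)
          (blinfun_apply :: ('a::real_normed_vector \<Rightarrow>\<^sub>L real) \<Rightarrow> _)"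
    unfolding weak_star_topology_def using continuous_map_pullback[OF continuous_map_id] by simp
  show "inj_on blinfun_apply (topspace weak_star_topology)"
    by (simp add: inj_on_def blinfun_apply_inject)
qed

section \<open>U-embeddings\<close>

definition dual_map :: "('a::real_normed_vector \<Rightarrow> 'b::real_normed_vector) \<Rightarrow> ('b \<Rightarrow>\<^sub>L real) \<Rightarrow> ('a \<Rightarrow>\<^sub>L real)"
  where "dual_map T F = Blinfun (\<lambda>x. F (T x))"

lemma U_embedding_norm: "U_embedding T \<Longrightarrow> norm (T x) = norm x"
  unfolding U_embedding_def by blast

lemma U_embedding_bounded_linear:
  assumes "U_embedding T"
  shows "bounded_linear T"
proof -
  have "linear T" using assms unfolding U_embedding_def by blast
  then show ?thesis
    using U_embedding_norm[OF assms]
    by (intro bounded_linear_intro[where K = 1]) (simp_all add: linear_add linear_scale)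
qed

context
  fixes T :: "'a::real_normed_vector \<Rightarrow> 'b::real_normed_vector"
  assumes U: "U_embedding T"
begin

lemma dual_map_apply [simp]: "dual_map T F x = F (T x)"
proof -
  have "bounded_linear (\<lambda>x. F (T x))"
    by (rule bounded_linear_compose[OF blinfun.bounded_linear_right U_embedding_bounded_linear[OF U]])
  then show ?thesis by (simp add: dual_map_def bounded_linear_Blinfun_apply)
qed

lemma dual_map_add: "dual_map T (F + G) = dual_map T F + dual_map T G"
  by (intro blinfun_eqI) (simp add: blinfun.add_left)

lemma dual_map_scaleR: "dual_map T (a *\<^sub>R F) = a *\<^sub>R dual_map T F"
  by (intro blinfun_eqI) (simp add: blinfun.scaleR_left)

lemma dual_map_uminus: "dual_map T (- F) = - dual_map T F"
  by (intro blinfun_eqI) (simp add: blinfun.minus_left)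

lemma norm_dual_map_le: "norm (dual_map T F) \<le> norm F"
proof (rule norm_blinfun_bound)
  show "norm (dual_map T F x) \<le> norm F * norm x" for x
    using norm_blinfun[of F "T x"] by (simp add: U_embedding_norm[OF U])
qed simp

lemma U_embedding_ex1_extension:
  fixes f :: "'a \<Rightarrow>\<^sub>L real"
  shows "\<exists>!F :: 'b \<Rightarrow>\<^sub>L real. (\<forall>x. blinfun_apply F (T x) = f x) \<and> norm F = norm f"
  using U unfolding U_embedding_def by (elim conjE allE)

lemma norm_preserving_extension:
  obtains F where "dual_map T F = f" "norm F = norm f"
proof -
  obtain F :: "'b \<Rightarrow>\<^sub>L real" where "\<forall>x. F (T x) = f x" "norm F = norm f"
    using U_embedding_ex1_extension by blast
  then show thesis by (intro that[of F] blinfun_eqI) simp_all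
qed

lemma norm_preserving_extension_unique:
  assumes "dual_map T F = f" "norm F = norm f" "dual_map T G = f" "norm G = norm f"
  shows "F = G"
proof -
  have "\<forall>x. F (T x) = f x" using assms(1) by auto
  moreover have "\<forall>x. G (T x) = f x" using assms(3) by auto
  ultimately show ?thesis
    using U_embedding_ex1_extension[of f] assms(2,4) by (elim ex1E) blast
qed

lemma extreme_point_of_norm_preserving_extension:
  assumes f: "dual_map T F extreme_point_of cball 0 1"
    and nf: "norm (dual_map T F) = 1" and nF: "norm F = 1"
  shows "F extreme_point_of cball 0 1"
proof -
  have key: "P = F" if "P \<in> cball 0 1" "Q \<in> cball 0 1" "0 < u" "u < 1"
    and F_eq: "F = (1 - u) *\<^sub>R P + u *\<^sub>R Q" for P Q u
  proof -
    have "dual_map T P \<in> cball 0 1" "dual_map T Q \<in> cball 0 1"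
      using that norm_dual_map_le[of P] norm_dual_map_le[of Q] by auto
    moreover have "dual_map T F = (1 - u) *\<^sub>R dual_map T P + u *\<^sub>R dual_map T Q"
      by (simp add: F_eq dual_map_add dual_map_scaleR)
    ultimately have "dual_map T P = dual_map T Q"
      using extreme_point_of_convex_combinationD[OF f _ _ that(3,4)] by blast
    with \<open>dual_map T F = _\<close> have "dual_map T P = dual_map T F" by (simp flip: scaleR_add_left)
    moreover from this have "norm P = norm (dual_map T F)"
      using norm_dual_map_le[of P] that(1) nf by simp
    ultimately show "P = F" using nF nf by (intro norm_preserving_extension_unique) auto
  qed
  show ?thesis
    unfolding extreme_point_of_iff_convex_combination
  proof (intro conjI ballI allI impI)
    show "F \<in> cball 0 1" using nF by simp
    fix P Q u
    assume "P \<in> cball 0 1" "Q \<in> cball 0 1" "0 < u \<and> u < 1 \<and> F = (1 - u) *\<^sub>R P + u *\<^sub>R Q"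
    then show "P = Q" using key[of P Q u] key[of Q P "1 - u"] by (auto simp: add.commute)
  qed
qed

lemma extreme_point_of_dual_map:
  assumes F: "F extreme_point_of cball 0 1" and nf: "norm (dual_map T F) = 1"
  shows "dual_map T F extreme_point_of cball 0 1"
  unfolding extreme_point_of_iff_convex_combination
proof (intro conjI ballI allI impI)
  show "dual_map T F \<in> cball 0 1" using nf by simp
  fix a b u
  assume ab: "a \<in> cball 0 1" "b \<in> cball 0 1"
    and u: "0 < u \<and> u < 1 \<and> dual_map T F = (1 - u) *\<^sub>R a + u *\<^sub>R b"
  obtain G H where G: "dual_map T G = a" "norm G = norm a" and H: "dual_map T H = b" "norm H = norm b"
    using norm_preserving_extension by metis
  then have GH: "G \<in> cball 0 1" "H \<in> cball 0 1" using ab by auto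
  define M where "M = (1 - u) *\<^sub>R G + u *\<^sub>R H"
  have "dual_map T M = dual_map T F" using u by (simp add: M_def dual_map_add dual_map_scaleR G H)
  moreover have "norm M \<le> 1"
    using convexD[OF convex_cball GH, of "1 - u" u] u by (simp add: M_def)
  moreover have "norm F = 1"
    using F nf norm_dual_map_le[of F] by (simp add: extreme_point_of_def)
  ultimately have "M = F"
    using nf norm_dual_map_le[of M] by (intro norm_preserving_extension_unique) auto
  then have "G = H"
    using extreme_point_of_convex_combinationD[OF F GH, of u] u by (simp add: M_def)
  with G H show "a = b" by simp
qed

end


context
  fixes T :: "'a::real_normed_vector \<Rightarrow> ('k::topological_space \<Rightarrow>\<^sub>C real)"
  assumes U: "U_embedding T" and compact: "compact (UNIV :: 'k set)"
begin

lemma U_embedding_norming_eval_at: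
  assumes "\<exists>x::'a. x \<noteq> 0"
  obtains k where "norm (dual_map T (eval_at k)) = 1"
proof -
  obtain x :: 'a where "norm x = 1" using assms by (metis norm_sgn)
  obtain k where k: "\<And>y. \<bar>T x y\<bar> \<le> \<bar>T x k\<bar>"
    using continuous_attains_sup[OF compact, of "\<lambda>y. \<bar>T x y\<bar>"]
    by (auto intro: continuous_intros)
  have "1 = norm (T x)" using U_embedding_norm[OF U] \<open>norm x = 1\<close> by simp
  also have "\<dots> \<le> \<bar>dual_map T (eval_at k) x\<bar>" by (simp add: norm_bound k dual_map_apply[OF U])
  also have "\<dots> \<le> norm (dual_map T (eval_at k))"
    using norm_blinfun[of "dual_map T (eval_at k)" x] \<open>norm x = 1\<close> by simp
  finally show thesis
    using that norm_dual_map_le[OF U, of "eval_at k"] by simp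
qed

lemma dual_map_eval_at_extreme_point:
  assumes "norm (dual_map T (eval_at k)) = 1"
  shows "dual_map T (eval_at k) extreme_point_of cball 0 1"
  using extreme_point_of_dual_map[OF U eval_at_extreme_point assms] .

lemma extreme_points_subset_range_dual_map_eval_at:
  assumes "\<exists>x::'a. x \<noteq> 0"
  shows "{f. f extreme_point_of cball 0 1} \<subseteq>
           range (\<lambda>k. dual_map T (eval_at k)) \<union> range (\<lambda>k. - dual_map T (eval_at k))"
proof
  fix f :: "'a \<Rightarrow>\<^sub>L real"
  assume "f \<in> {f. f extreme_point_of cball 0 1}"
  then have f: "f extreme_point_of cball 0 1" by simp
  obtain j where "norm (dual_map T (eval_at j)) = 1"
    using U_embedding_norming_eval_at[OF assms] by blast
  then have "dual_map T (eval_at j) \<noteq> 0" by auto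
  then have nf: "norm f = 1" using norm_extreme_point_of_cball[OF f] by blast
  obtain F where F: "dual_map T F = f" "norm F = norm f"
    using norm_preserving_extension[OF U] by blast
  with f nf have "F extreme_point_of cball 0 1"
    using extreme_point_of_norm_preserving_extension[OF U, of F] by simp
  then obtain k where "F = eval_at k \<or> F = - eval_at k"
    using extreme_point_of_dual_ball_bcontfun_iff[OF compact] by blast
  with F(1) show "f \<in> range (\<lambda>k. dual_map T (eval_at k)) \<union> range (\<lambda>k. - dual_map T (eval_at k))"
    by (auto simp: dual_map_uminus[OF U])
qed

lemma dual_map_eval_at_neq_uminus:
  assumes "norm (dual_map T (eval_at k)) = 1"
  shows "dual_map T (eval_at k) \<noteq> - dual_map T (eval_at j)"
proof
  assume eq: "dual_map T (eval_at k) = - dual_map T (eval_at j)"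
  have "eval_at k = - eval_at j"
    using assms eq
    by (intro norm_preserving_extension_unique[OF U, of _ "dual_map T (eval_at k)"])
       (simp_all add: dual_map_uminus[OF U])
  then have "eval_at k (const_bcontfun 1) = - eval_at j (const_bcontfun 1)"
    by (simp add: blinfun.minus_left)
  then show False by simp
qed

lemma closedin_range_dual_map_eval_at:
  "closedin weak_star_topology (range (\<lambda>k. c *\<^sub>R dual_map T (eval_at k)))"
proof (rule compactin_imp_closedin[OF Hausdorff_space_weak_star_topology])
  have "continuous_map euclidean weak_star_topology (\<lambda>k. c *\<^sub>R dual_map T (eval_at k))"
    by (intro continuous_map_weak_star_topologyI)
       (simp add: blinfun.scaleR_left dual_map_apply[OF U] continuous_intros)
  then show "compactin weak_star_topology (range (\<lambda>k. c *\<^sub>R dual_map T (eval_at k)))"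
    using compact by (intro image_compactin) (auto simp: compactin_euclidean_iff)
qed

end

theorem corollary5p1:
  fixes T :: "'a::banach \<Rightarrow> ('k::t2_space \<Rightarrow>\<^sub>C real)"
  assumes nontriv: "\<exists>x::'a. x \<noteq> 0"
    and conn: "connectedin (weak_star_topology :: ('a \<Rightarrow>\<^sub>L real) topology)
                 ((weak_star_topology closure_of
                     {f :: 'a \<Rightarrow>\<^sub>L real. f extreme_point_of cball 0 1})
                  \<inter> sphere 0 1)"
    and K_compact: "compact (UNIV :: 'k set)"
  shows "\<not> U_embedding T"
proof
  assume U: "U_embedding T"
  define Ext where "Ext = {f :: 'a \<Rightarrow>\<^sub>L real. f extreme_point_of cball 0 1}"
  define S where "S = weak_star_topology closure_of Ext \<inter> sphere 0 1"
  define A where "A = range (\<lambda>k. dual_map T (eval_at k))"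
  define B where "B = range (\<lambda>k. - dual_map T (eval_at k))"
  have closed: "closedin weak_star_topology A" "closedin weak_star_topology B"
    using closedin_range_dual_map_eval_at[OF U K_compact, of 1]
      closedin_range_dual_map_eval_at[OF U K_compact, of "-1"] by (simp_all add: A_def B_def)
  have cover: "S \<subseteq> A \<union> B"
    using extreme_points_subset_range_dual_map_eval_at[OF U K_compact nontriv]
      closure_of_minimal[OF _ closedin_Un[OF closed]] by (auto simp: S_def Ext_def A_def B_def)
  have disjoint: "A \<inter> B \<inter> S = {}"
    using dual_map_eval_at_neq_uminus[OF U K_compact] by (fastforce simp: A_def B_def S_def)
  obtain k where k: "norm (dual_map T (eval_at k)) = 1"
    using U_embedding_norming_eval_at[OF U K_compact nontriv] by blast
  then have "dual_map T (eval_at k) \<in> A \<inter> S" "- dual_map T (eval_at k) \<in> B \<inter> S"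
    using dual_map_eval_at_extreme_point[OF U K_compact k] extreme_point_of_cball_uminus
      closure_of_subset[of Ext weak_star_topology] by (auto simp: A_def B_def S_def Ext_def)
  then show False
    using conn closed cover disjoint unfolding connectedin_closedin S_def Ext_def by blast
qed

end
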